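(* Let $\Omega\subset\mathbb{R}^n$ be a bounded open set, and let $\varpi,\varpi_1$ be oscillation functions such that $\varpi$ is concave in a neighborhood of the origin and $\lim_{r\to0}\varpi_1(r)/\varpi(r)=0$. Then $D_{\varpi_1}(\overline{\Omega})$ is not dense in $D_{\varpi}(\overline{\Omega})$ (with respect to the norm $\|\cdot\|_{\varpi}$).
   Context: An oscillation function is a real, continuous, non-decreasing function $\varpi$ defined on $[0,R)$ for some $R>0$, with $\varpi(0)=0$ and $\varpi(r)>0$ for $r>0$. For $f\in C(\overline{\Omega})$ and $r>0$ set $\omega_f(r)=\sup\{|f(x)-f(y)|:\ x,y\in\Omega,\ 0<|x-y|\le r\}$. Define $[f]_{\varpi}=\sup_{0<r<R}\omega_f(r)/\varpi(r)$, $D_{\varpi}(\overline{\Omega})=\{f\in C(\overline{\Omega}): [f]_{\varpi}<\infty\}$, with norm $\|f\|_{\varpi}=[f]_{\varpi}+\sup_{\overline{\Omega}}|f|$. Note $D_{\varpi_1}(\overline{\Omega})\subset D_{\varpi}(\overline{\Omega})$ under the hypothesis. *)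

theory Defs
  imports "HOL-Analysis.Analysis"
begin

definition oscillation_function :: "(real \<Rightarrow> real) \<Rightarrow> real \<Rightarrow> bool" where
  "oscillation_function w R \<longleftrightarrow>
     R > 0 \<and> continuous_on {0..<R} w \<and> mono_on {0..<R} w \<and> w 0 = 0 \<and>
     (\<forall>r\<in>{0<..<R}. w r > 0)"

definition modcont :: "'a::euclidean_space set \<Rightarrow> ('a \<Rightarrow> real) \<Rightarrow> real \<Rightarrow> real" where
  "modcont \<Omega> f r = Sup {\<bar>f x - f y\<bar> | x y. x \<in> \<Omega> \<and> y \<in> \<Omega> \<and> 0 < dist x y \<and> dist x y \<le> r}"

definition osc_seminorm :: "(real \<Rightarrow> real) \<Rightarrow> real \<Rightarrow> 'a::euclidean_space set \<Rightarrow> ('a \<Rightarrow> real) \<Rightarrow> ereal" where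
  "osc_seminorm w R \<Omega> f = (SUP r\<in>{0<..<R}. ereal (modcont \<Omega> f r / w r))"

definition Dspace :: "(real \<Rightarrow> real) \<Rightarrow> real \<Rightarrow> 'a::euclidean_space set \<Rightarrow> ('a \<Rightarrow> real) set" where
  "Dspace w R \<Omega> = {f. continuous_on (closure \<Omega>) f \<and> osc_seminorm w R \<Omega> f < \<infinity>}"

definition osc_norm :: "(real \<Rightarrow> real) \<Rightarrow> real \<Rightarrow> 'a::euclidean_space set \<Rightarrow> ('a \<Rightarrow> real) \<Rightarrow> ereal" where
  "osc_norm w R \<Omega> f = osc_seminorm w R \<Omega> f + ereal (Sup ((\<lambda>x. \<bar>f x\<bar>) ` closure \<Omega>))"

end

theory Submission
  imports Defs
begin

text \<open>The witness is \<open>f x = w (min |x - x\<^sub>0| d)\<close> for a point \<open>x\<^sub>0\<close> of \<open>\<Omega>\<close> and small \<open>d\<close>.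
  Concavity of \<open>w\<close> with \<open>w 0 = 0\<close> makes \<open>w\<close> subadditive near \<open>0\<close>, so \<open>f\<close> has modulus of
  continuity at most \<open>w\<close> and lies in \<open>D\<^sub>w\<close>; yet on the segment leaving \<open>x\<^sub>0\<close> it oscillates by
  exactly \<open>w r\<close> at every small scale \<open>r\<close>. A function \<open>g \<in> D\<^sub>w\<^sub>1\<close> oscillates by at most
  \<open>B w\<^sub>1 r = o(w r)\<close> at scale \<open>r\<close>, so \<open>[f - g]\<^sub>w \<ge> 1/2\<close>.\<close>

lemma concave_on_subadditive:
  fixes w :: "real \<Rightarrow> real"
  assumes concave: "concave_on {0..<\<delta>} w" and "w 0 = 0" and "0 \<le> b" "b \<le> a" "a < \<delta>"
  shows "w a \<le> w b + w (a - b)"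
proof (cases "a = 0")
  case True
  then show ?thesis using assms by simp
next
  case False
  then have a: "a > 0" using assms by simp
  have "w ((1 - b/a) *\<^sub>R 0 + (b/a) *\<^sub>R a) \<ge> (1 - b/a) * w 0 + (b/a) * w a"
    by (rule concave_onD[OF concave]) (use assms a in auto)
  then have "w b \<ge> (b/a) * w a" using a assms by simp
  moreover have "w ((1 - (a-b)/a) *\<^sub>R 0 + ((a-b)/a) *\<^sub>R a) \<ge> (1 - (a-b)/a) * w 0 + ((a-b)/a) * w a"
    by (rule concave_onD[OF concave]) (use assms a in auto)
  then have "w (a - b) \<ge> ((a-b)/a) * w a" using a assms by simp
  moreover have "(b/a) * w a + ((a-b)/a) * w a = w a" using a by (simp add: field_simps)
  ultimately show ?thesis by linarith
qed

lemma concave_mono_abs_diff_le: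
  fixes w :: "real \<Rightarrow> real"
  assumes "concave_on {0..<\<delta>} w" "mono_on {0..<\<delta>} w" "w 0 = 0"
    and "p \<in> {0..<\<delta>}" "q \<in> {0..<\<delta>}"
  shows "\<bar>w p - w q\<bar> \<le> w \<bar>p - q\<bar>"
proof -
  have *: "\<bar>w s - w t\<bar> \<le> w (s - t)" if "t \<le> s" "s \<in> {0..<\<delta>}" "t \<in> {0..<\<delta>}" for s t
    using concave_on_subadditive[OF assms(1,3), of t s] mono_onD[OF assms(2), of t s] that by auto
  show ?thesis
    using *[of p q] *[of q p] assms(4,5) by (cases "q \<le> p") (auto simp: abs_minus_commute)
qed

lemma abs_diff_le_modcont:
  assumes "x \<in> \<Omega>" "y \<in> \<Omega>" "0 < dist x y" "dist x y \<le> r"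
    and bounded: "\<And>z. z \<in> \<Omega> \<Longrightarrow> \<bar>F z\<bar> \<le> M"
  shows "\<bar>F x - F y\<bar> \<le> modcont \<Omega> F r"
  unfolding modcont_def
proof (rule cSup_upper)
  show "\<bar>F x - F y\<bar> \<in> {\<bar>F x - F y\<bar> |x y. x \<in> \<Omega> \<and> y \<in> \<Omega> \<and> 0 < dist x y \<and> dist x y \<le> r}"
    using assms by blast
  show "bdd_above {\<bar>F x - F y\<bar> |x y. x \<in> \<Omega> \<and> y \<in> \<Omega> \<and> 0 < dist x y \<and> dist x y \<le> r}"
  proof (rule bdd_aboveI)
    fix t assume "t \<in> {\<bar>F x - F y\<bar> |x y. x \<in> \<Omega> \<and> y \<in> \<Omega> \<and> 0 < dist x y \<and> dist x y \<le> r}"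
    then obtain a c where "t = \<bar>F a - F c\<bar>" "a \<in> \<Omega>" "c \<in> \<Omega>" by blast
    with bounded[of a] bounded[of c] show "t \<le> 2 * M" by linarith
  qed
qed

lemma modcont_le:
  assumes "\<And>x y. x \<in> \<Omega> \<Longrightarrow> y \<in> \<Omega> \<Longrightarrow> 0 < dist x y \<Longrightarrow> dist x y \<le> r \<Longrightarrow> \<bar>F x - F y\<bar> \<le> c"
    and "\<exists>x\<in>\<Omega>. \<exists>y\<in>\<Omega>. 0 < dist x y \<and> dist x y \<le> r"
  shows "modcont \<Omega> F r \<le> c"
  unfolding modcont_def by (rule cSup_least) (use assms in auto)

lemma open_obtains_pair_at_dist:
  fixes \<Omega> :: "'a::euclidean_space set"
  assumes "open \<Omega>" "x\<^sub>0 \<in> \<Omega>"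
  obtains \<rho> where "\<rho> > 0" "\<And>r. 0 \<le> r \<Longrightarrow> r < \<rho> \<Longrightarrow> \<exists>y\<in>\<Omega>. dist x\<^sub>0 y = r"
proof -
  obtain \<rho> where "\<rho> > 0" "ball x\<^sub>0 \<rho> \<subseteq> \<Omega>" using assms open_contains_ball by blast
  moreover have "\<exists>y\<in>ball x\<^sub>0 \<rho>. dist x\<^sub>0 y = r" if "0 \<le> r" "r < \<rho>" for r
    using vector_choose_dist[OF \<open>0 \<le> r\<close>, of x\<^sub>0] that by (metis mem_ball)
  ultimately show ?thesis using that by blast
qed

lemma osc_seminorm_le:
  assumes "\<And>r. r \<in> {0<..<R} \<Longrightarrow> modcont \<Omega> f r \<le> C * w r"
    and "\<And>r. r \<in> {0<..<R} \<Longrightarrow> w r > 0"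
  shows "osc_seminorm w R \<Omega> f \<le> ereal C"
  unfolding osc_seminorm_def
  by (rule SUP_least) (use assms in \<open>simp add: divide_le_eq\<close>)

lemma modcont_le_osc_seminorm:
  assumes "osc_seminorm w R \<Omega> g \<le> ereal B" "r \<in> {0<..<R}" "w r > 0"
  shows "modcont \<Omega> g r \<le> B * w r"
proof -
  have "ereal (modcont \<Omega> g r / w r) \<le> osc_seminorm w R \<Omega> g"
    unfolding osc_seminorm_def using assms(2) by (rule SUP_upper)
  then have "ereal (modcont \<Omega> g r / w r) \<le> ereal B" using assms(1) by (rule order.trans)
  then have "modcont \<Omega> g r / w r \<le> B" by simp
  then show ?thesis using assms(3) by (simp add: divide_le_eq)
qed

lemma Dspace_bounded_oscillation:
  assumes "bounded \<Omega>" "g \<in> Dspace w R \<Omega>" "oscillation_function w R"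
  obtains K B where "\<And>x. x \<in> closure \<Omega> \<Longrightarrow> \<bar>g x\<bar> \<le> K"
    and "\<And>r. r \<in> {0<..<R} \<Longrightarrow> modcont \<Omega> g r \<le> B * w r"
proof -
  have "continuous_on (closure \<Omega>) g" and finite: "osc_seminorm w R \<Omega> g < \<infinity>"
    using assms(2) unfolding Dspace_def by auto
  then have "bounded (g ` closure \<Omega>)"
    using assms(1) by (intro compact_imp_bounded compact_continuous_image) (simp_all add: compact_closure)
  then obtain K where "\<And>x. x \<in> closure \<Omega> \<Longrightarrow> \<bar>g x\<bar> \<le> K" unfolding bounded_real by blast
  moreover obtain B where "osc_seminorm w R \<Omega> g \<le> ereal B"
    using finite by (cases "osc_seminorm w R \<Omega> g") auto
  ultimately show ?thesis
    using that modcont_le_osc_seminorm assms(3) unfolding oscillation_function_def by blast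
qed

lemma modcont_ratio_le_osc_norm:
  assumes "\<And>x. x \<in> closure \<Omega> \<Longrightarrow> \<bar>h x\<bar> \<le> M" "\<Omega> \<noteq> {}" "r \<in> {0<..<R}"
  shows "ereal (modcont \<Omega> h r / w r) \<le> osc_norm w R \<Omega> h"
proof -
  obtain x where x: "x \<in> closure \<Omega>" using assms(2) closure_subset by blast
  have "0 \<le> \<bar>h x\<bar>" by simp
  also have "\<bar>h x\<bar> \<le> Sup ((\<lambda>x. \<bar>h x\<bar>) ` closure \<Omega>)"
    by (rule cSup_upper) (use x assms(1) in \<open>auto intro!: bdd_aboveI2\<close>)
  finally have "ereal 0 \<le> ereal (Sup ((\<lambda>x. \<bar>h x\<bar>) ` closure \<Omega>))" by simp
  moreover have "ereal (modcont \<Omega> h r / w r) \<le> osc_seminorm w R \<Omega> h"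
    unfolding osc_seminorm_def using assms(3) by (rule SUP_upper)
  ultimately have "ereal (modcont \<Omega> h r / w r) + ereal 0 \<le> osc_norm w R \<Omega> h"
    unfolding osc_norm_def by (rule add_mono[rotated])
  then show ?thesis by simp
qed

lemma concave_profile_in_Dspace:
  fixes \<Omega> :: "'a::euclidean_space set"
  assumes "open \<Omega>" "oscillation_function w R" "\<delta> > 0" "\<delta> \<le> R" "concave_on {0..<\<delta>} w"
    and "0 < d" "d < \<delta>" "x\<^sub>0 \<in> \<Omega>"
  shows "(\<lambda>x. w (min (dist x x\<^sub>0) d)) \<in> Dspace w R \<Omega>"
proof -
  let ?f = "\<lambda>x. w (min (dist x x\<^sub>0) d)"
  have w: "continuous_on {0..<R} w" "mono_on {0..<R} w" "w 0 = 0" "\<And>r. r \<in> {0<..<R} \<Longrightarrow> w r > 0"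
    using assms(2) unfolding oscillation_function_def by auto
  have "continuous_on UNIV ?f"
    by (rule continuous_on_compose2[OF w(1), of _ "\<lambda>x. min (dist x x\<^sub>0) d"])
      (use assms in \<open>auto intro!: continuous_intros\<close>)
  then have continuous: "continuous_on (closure \<Omega>) ?f" by (rule continuous_on_subset) simp
  have w_mono: "mono_on {0..<\<delta>} w" by (rule mono_on_subset[OF w(2)]) (use assms(4) in auto)
  have profile_modcont: "\<bar>?f x - ?f y\<bar> \<le> w r" if "dist x y \<le> r" "r < R" for x y r
  proof -
    define p q where "p = min (dist x x\<^sub>0) d" and "q = min (dist y x\<^sub>0) d"
    have pq: "p \<in> {0..<\<delta>}" "q \<in> {0..<\<delta>}" using assms(6,7) by (auto simp: p_def q_def)
    have "\<bar>dist x x\<^sub>0 - dist y x\<^sub>0\<bar> \<le> dist x y"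
      using abs_dist_diff_le[of x x\<^sub>0 y] by (simp add: dist_commute)
    then have "\<bar>p - q\<bar> \<le> r" using that unfolding p_def q_def by linarith
    have "\<bar>w p - w q\<bar> \<le> w \<bar>p - q\<bar>" by (rule concave_mono_abs_diff_le[OF assms(5) w_mono w(3) pq])
    also have "\<dots> \<le> w r" by (rule mono_onD[OF w(2)]) (use \<open>\<bar>p - q\<bar> \<le> r\<close> that in auto)
    finally show ?thesis by (simp add: p_def q_def)
  qed
  obtain \<rho> where \<rho>: "\<rho> > 0" "\<And>r. 0 \<le> r \<Longrightarrow> r < \<rho> \<Longrightarrow> \<exists>y\<in>\<Omega>. dist x\<^sub>0 y = r"
    using open_obtains_pair_at_dist[OF assms(1,8)] by blast
  have "modcont \<Omega> ?f r \<le> 1 * w r" if r: "r \<in> {0<..<R}" for r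
  proof (rule modcont_le)
    have "0 \<le> min r (\<rho>/2)" "min r (\<rho>/2) < \<rho>" using \<rho>(1) r by auto
    then obtain y where "y \<in> \<Omega>" "dist x\<^sub>0 y = min r (\<rho>/2)" using \<rho>(2) by blast
    moreover have "0 < dist x\<^sub>0 y" "dist x\<^sub>0 y \<le> r" using \<open>dist x\<^sub>0 y = min r (\<rho>/2)\<close> \<rho>(1) r by auto
    ultimately show "\<exists>x\<in>\<Omega>. \<exists>y\<in>\<Omega>. 0 < dist x y \<and> dist x y \<le> r" using assms(8) by blast
  qed (use profile_modcont r in auto)
  then have "osc_seminorm w R \<Omega> ?f \<le> ereal 1" using w(4) by (rule osc_seminorm_le)
  with continuous show ?thesis unfolding Dspace_def by auto
qed

lemma osc_norm_diff_ge_half: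
  fixes \<Omega> :: "'a::euclidean_space set"
  assumes "bounded \<Omega>" "oscillation_function w R" "oscillation_function w1 R1"
    and "((\<lambda>r. w1 r / w r) \<longlongrightarrow> 0) (at_right 0)"
    and "\<rho> > 0" and full_oscillation: "\<And>r. r \<in> {0<..<\<rho>} \<Longrightarrow>
      \<exists>x\<in>\<Omega>. \<exists>y\<in>\<Omega>. dist x y = r \<and> w r \<le> \<bar>f x - f y\<bar>"
    and f_bounded: "\<And>x. x \<in> closure \<Omega> \<Longrightarrow> \<bar>f x\<bar> \<le> M"
    and g: "g \<in> Dspace w1 R1 \<Omega>"
  shows "ereal (1/2) \<le> osc_norm w R \<Omega> (\<lambda>x. f x - g x)"
proof -
  have pos: "R > 0" "R1 > 0" "\<And>r. r \<in> {0<..<R} \<Longrightarrow> w r > 0"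
    using assms(2,3) unfolding oscillation_function_def by auto
  obtain K B where K: "\<And>x. x \<in> closure \<Omega> \<Longrightarrow> \<bar>g x\<bar> \<le> K"
    and B: "\<And>r. r \<in> {0<..<R1} \<Longrightarrow> modcont \<Omega> g r \<le> B * w1 r"
    using Dspace_bounded_oscillation[OF assms(1) g assms(3)] by blast
  have "((\<lambda>r. B * (w1 r / w r)) \<longlongrightarrow> B * 0) (at_right 0)"
    by (intro tendsto_mult tendsto_const assms(4))
  then have "\<forall>\<^sub>F r in at_right 0. B * (w1 r / w r) < 1/2"
    by (intro order_tendstoD) auto
  moreover have "\<forall>\<^sub>F r in at_right (0::real). r \<in> {0<..<min \<rho> (min R R1)}"
    using pos \<open>\<rho> > 0\<close> by (intro eventually_at_right_field[THEN iffD2] exI[of _ "min \<rho> (min R R1)"]) auto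
  ultimately obtain r where r: "B * (w1 r / w r) < 1/2" "r \<in> {0<..<min \<rho> (min R R1)}"
    using eventually_happens[OF eventually_conj] by (fastforce simp: trivial_limit_at_right_real)
  then obtain x y where xy: "x \<in> \<Omega>" "y \<in> \<Omega>" "dist x y = r" and fxy: "w r \<le> \<bar>f x - f y\<bar>"
    using full_oscillation by force
  let ?h = "\<lambda>x. f x - g x"
  have h_bounded: "\<bar>?h z\<bar> \<le> M + K" if "z \<in> closure \<Omega>" for z
    using f_bounded[OF that] K[OF that] by linarith
  have "\<bar>g x - g y\<bar> \<le> modcont \<Omega> g r"
    by (rule abs_diff_le_modcont[where M=K]) (use xy r K closure_subset in auto)
  also have "\<dots> \<le> B * w1 r" using B r by auto
  finally have "w r - B * w1 r \<le> \<bar>?h x - ?h y\<bar>" using fxy by linarith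
  also have "\<bar>?h x - ?h y\<bar> \<le> modcont \<Omega> ?h r"
    by (rule abs_diff_le_modcont[where M="M + K"]) (use xy r h_bounded closure_subset in auto)
  finally have "w r - B * w1 r \<le> modcont \<Omega> ?h r" .
  moreover have "w r > 0" using pos r by auto
  ultimately have "1/2 \<le> modcont \<Omega> ?h r / w r"
    using r(1) by (simp add: field_simps)
  also have "ereal \<dots> \<le> osc_norm w R \<Omega> ?h"
    by (rule modcont_ratio_le_osc_norm[OF h_bounded]) (use xy r in auto)
  finally show ?thesis by simp
qed

theorem theorem2p7:
  fixes \<Omega> :: "'a::euclidean_space set"
    and w w1 :: "real \<Rightarrow> real" and R R1 :: real
  assumes "bounded \<Omega>" and "open \<Omega>" and "\<Omega> \<noteq> {}"
    and "oscillation_function w R" and "oscillation_function w1 R1"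
    and "\<exists>\<delta>>0. \<delta> \<le> R \<and> concave_on {0..<\<delta>} w"
    and "((\<lambda>r. w1 r / w r) \<longlongrightarrow> 0) (at_right 0)"
  shows "\<exists>f\<in>Dspace w R \<Omega>. \<exists>\<epsilon>>0. \<forall>g\<in>Dspace w1 R1 \<Omega>.
           osc_norm w R \<Omega> (\<lambda>x. f x - g x) \<ge> ereal \<epsilon>"
proof -
  obtain \<delta> where \<delta>: "\<delta> > 0" "\<delta> \<le> R" "concave_on {0..<\<delta>} w" using assms(6) by blast
  have w_mono: "mono_on {0..<R} w" and "w 0 = 0"
    using assms(4) unfolding oscillation_function_def by auto
  define d where "d = \<delta> / 2"
  have d: "0 < d" "d < \<delta>" using \<delta> by (auto simp: d_def)
  obtain x\<^sub>0 where x\<^sub>0: "x\<^sub>0 \<in> \<Omega>" using assms(3) by blast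
  obtain \<rho> where \<rho>: "\<rho> > 0" "\<And>r. 0 \<le> r \<Longrightarrow> r < \<rho> \<Longrightarrow> \<exists>y\<in>\<Omega>. dist x\<^sub>0 y = r"
    using open_obtains_pair_at_dist[OF assms(2) x\<^sub>0] by blast
  define f where "f x = w (min (dist x x\<^sub>0) d)" for x
  have f_bounded: "\<bar>f x\<bar> \<le> w d" for x
    using mono_onD[OF w_mono, of 0 "min (dist x x\<^sub>0) d"] mono_onD[OF w_mono, of "min (dist x x\<^sub>0) d" d]
      \<open>w 0 = 0\<close> d \<delta> by (auto simp: f_def)
  have full_oscillation: "\<exists>x\<in>\<Omega>. \<exists>y\<in>\<Omega>. dist x y = r \<and> w r \<le> \<bar>f x - f y\<bar>"
    if r: "r \<in> {0<..<min \<rho> d}" for r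
  proof -
    obtain y where "y \<in> \<Omega>" "dist y x\<^sub>0 = r" using \<rho>(2)[of r] r by (auto simp: dist_commute)
    moreover have "f y - f x\<^sub>0 = w r" using \<open>dist y x\<^sub>0 = r\<close> r \<open>w 0 = 0\<close> d by (simp add: f_def)
    then have "w r \<le> \<bar>f y - f x\<^sub>0\<bar>" by simp
    ultimately show ?thesis using x\<^sub>0 by blast
  qed
  have "ereal (1/2) \<le> osc_norm w R \<Omega> (\<lambda>x. f x - g x)" if "g \<in> Dspace w1 R1 \<Omega>" for g
    by (rule osc_norm_diff_ge_half[where \<rho>="min \<rho> d", OF assms(1,4,5,7) _ full_oscillation f_bounded that])
      (use \<rho>(1) d(1) in simp)
  moreover have "f \<in> Dspace w R \<Omega>"
    unfolding f_def using assms(2,4) \<delta> d x\<^sub>0 by (rule concave_profile_in_Dspace)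
  ultimately show ?thesis by (intro bexI[of _ f] exI[of _ "1/2"]) auto
qed

end
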